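(* Let $p>1$ and $n>1$ be an integer. Let $f(z) = c_0 + c_1 z + c_2 z^2 + \dots$ be a bounded holomorphic function on $\mathbb D = \{z:|z|<1\}$ with no zeros in $\mathbb D$, belonging to $H^p$, which is not a polynomial of degree at most $n$. Then there exists $\varepsilon_0>0$ such that for every $\varepsilon<\varepsilon_0$ and every point $\mathbf d = (d_0, d_1, \dots, d_n) \in \mathbb C^{n+1}$ with $|\mathbf d| \le \varepsilon$ there is a bounded, zero-free holomorphic function $f^*(z) = c_0^* + c_1^* z + c_2^* z^2 + \dots \in H^p$ on $\mathbb D$ satisfying $c_j^* = c_j + d_j$ for all $j = 0, 1, \dots, n$ and $$\|f^*\|_p = \|f\|_p + O(\varepsilon),$$ i.e. $\bigl|\|f^*\|_p - \|f\|_p\bigr| \le C\varepsilon$ with a constant $C$ independent of $\mathbf d$ and $\varepsilon$.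
   Context: $H^p$ is the Hardy space of holomorphic functions on $\mathbb D$ with norm $\|f\|_p = \sup_{r<1}\bigl(\frac{1}{2\pi}\int_{-\pi}^{\pi}|f(re^{i\theta})|^p\,d\theta\bigr)^{1/p}$. $|\mathbf d|$ denotes the Euclidean norm on $\mathbb C^{n+1}$. *)

theory Defs
  imports "HOL-Analysis.Analysis"
begin

definition hardy_mean :: "real \<Rightarrow> (complex \<Rightarrow> complex) \<Rightarrow> real \<Rightarrow> real" where
  "hardy_mean p f r = (1 / (2 * pi)) * integral {-pi..pi} (\<lambda>t. norm (f (complex_of_real r * cis t)) powr p)"

definition hardy_norm :: "real \<Rightarrow> (complex \<Rightarrow> complex) \<Rightarrow> real" where
  "hardy_norm p f = (SUP r\<in>{0..<1}. hardy_mean p f r powr (1 / p))"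

definition hardy_space :: "real \<Rightarrow> (complex \<Rightarrow> complex) set" where
  "hardy_space p = {f. f holomorphic_on ball 0 1 \<and>
      bdd_above ((\<lambda>r. hardy_mean p f r powr (1 / p)) ` {0..<1})}"

definition taylor_coeff :: "(complex \<Rightarrow> complex) \<Rightarrow> nat \<Rightarrow> complex" where
  "taylor_coeff f j = (deriv ^^ j) f 0 / of_nat (fact j)"

end

theory Submission
  imports Defs "HOL-Complex_Analysis.Complex_Analysis"
begin

text \<open>
  The perturbed function is \<open>f\<^sup>* = f (1 + q)\<close> with a polynomial \<open>q\<close> of degree at most \<open>n\<close>.
  Multiplying by \<open>1 + q\<close> adds to \<open>c\<^sub>0, \<dots>, c\<^sub>n\<close> the first \<open>n + 1\<close> coefficients of the Cauchy
  product of \<open>(c\<^sub>j)\<close> and \<open>(q\<^sub>j)\<close>. Since \<open>c\<^sub>0 = f 0 \<noteq> 0\<close>, this triangular system is solved by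
  truncating the formal quotient \<open>d / f\<close>, whose coefficients depend linearly on \<open>d\<close>; hence
  \<open>|q| \<le> K \<epsilon>\<close> on the disc and \<open>|f\<^sup>* - f| \<le> K \<epsilon> |f|\<close> pointwise. Such a relative perturbation keeps
  \<open>f\<^sup>*\<close> bounded and zero-free and multiplies every integral mean by a factor between
  \<open>(1 - K \<epsilon>)\<^sup>p\<close> and \<open>(1 + K \<epsilon>)\<^sup>p\<close>, so \<open>\<parallel>f\<^sup>*\<parallel>\<^sub>p\<close> differs from \<open>\<parallel>f\<parallel>\<^sub>p\<close> by at most \<open>K \<epsilon> \<parallel>f\<parallel>\<^sub>p\<close>.
\<close>

lemma hardy_mean_nonneg: "hardy_mean p f r \<ge> 0"
  unfolding hardy_mean_def
  by (cases "(\<lambda>t. cmod (f (complex_of_real r * cis t)) powr p) integrable_on {-pi..pi}")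
     (auto intro!: divide_nonneg_nonneg integral_nonneg simp: not_integrable_integral)

lemma hardy_mean_integrable:
  assumes "continuous_on (ball 0 1) f" "0 \<le> r" "r < 1" "p > 0"
  shows "(\<lambda>t. cmod (f (complex_of_real r * cis t)) powr p) integrable_on {-pi..pi}"
proof -
  have "continuous_on UNIV (\<lambda>t. f (complex_of_real r * cis t))"
    using assms(2,3)
    by (intro continuous_on_compose2[OF assms(1)])
       (auto intro!: continuous_intros simp: norm_mult)
  then have "continuous_on {-pi..pi} (\<lambda>t. cmod (f (complex_of_real r * cis t)) powr p)"
    using assms(4) by (intro continuous_on_powr' continuous_intros) (auto intro: continuous_on_subset)
  then show ?thesis
    by (rule integrable_continuous_interval)
qed

lemma hardy_mean_le_dominated:
  assumes "continuous_on (ball 0 1) f" "p > 0" "b \<ge> 0" "0 \<le> r" "r < 1"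
    and "\<forall>z\<in>ball 0 1. cmod (g z) \<le> b * cmod (f z)"
  shows "hardy_mean p g r powr (1/p) \<le> b * hardy_mean p f r powr (1/p)"
proof -
  let ?F = "\<lambda>t. cmod (f (complex_of_real r * cis t)) powr p"
  let ?G = "\<lambda>t. cmod (g (complex_of_real r * cis t)) powr p"
  have on_circle: "complex_of_real r * cis t \<in> ball 0 1" for t
    using assms(4,5) by (simp add: norm_mult)
  have G_le: "?G t \<le> b powr p * ?F t" for t
  proof -
    have "?G t \<le> (b * cmod (f (complex_of_real r * cis t))) powr p"
      using assms(2,6) on_circle by (intro powr_mono2) auto
    then show ?thesis
      using assms(3) by (simp add: powr_mult)
  qed
  have F_int: "?F integrable_on {-pi..pi}"
    using assms(1,4,5,2) by (rule hardy_mean_integrable)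
  \<comment> \<open>\<open>g\<close> need not be continuous: a non-integrable \<open>?G\<close> has integral \<open>0\<close>.\<close>
  have "integral {-pi..pi} ?G \<le> b powr p * integral {-pi..pi} ?F"
  proof (cases "?G integrable_on {-pi..pi}")
    case True
    then have "integral {-pi..pi} ?G \<le> integral {-pi..pi} (\<lambda>t. b powr p * ?F t)"
      using integrable_cmul[OF F_int, of "b powr p"] by (intro integral_le G_le) auto
    then show ?thesis
      by simp
  qed (simp add: not_integrable_integral integral_nonneg F_int)
  then have "hardy_mean p g r \<le> b powr p * hardy_mean p f r"
    by (simp add: hardy_mean_def divide_right_mono)
  then have "hardy_mean p g r powr (1/p) \<le> (b powr p * hardy_mean p f r) powr (1/p)"
    using assms(2) hardy_mean_nonneg by (intro powr_mono2) auto
  also have "\<dots> = b * hardy_mean p f r powr (1/p)"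
    using assms(2,3) hardy_mean_nonneg[of p f r] by (simp add: powr_mult powr_powr)
  finally show ?thesis .
qed

lemma hardy_mean_root_le_hardy_norm:
  assumes "f \<in> hardy_space p" "0 \<le> r" "r < 1"
  shows "hardy_mean p f r powr (1/p) \<le> hardy_norm p f"
  using assms unfolding hardy_space_def hardy_norm_def by (intro cSUP_upper) auto

lemma hardy_space_dominated:
  assumes "p > 0" "f \<in> hardy_space p" "g holomorphic_on ball 0 1" "b \<ge> 0"
    and "\<forall>z\<in>ball 0 1. cmod (g z) \<le> b * cmod (f z)"
  shows "g \<in> hardy_space p" and "hardy_norm p g \<le> b * hardy_norm p f"
proof -
  have f_cont: "continuous_on (ball 0 1) f"
    using assms(2) by (simp add: hardy_space_def holomorphic_on_imp_continuous_on)
  have bound: "hardy_mean p g r powr (1/p) \<le> b * hardy_norm p f" if "r \<in> {0..<1}" for r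
  proof -
    have "hardy_mean p g r powr (1/p) \<le> b * hardy_mean p f r powr (1/p)"
      using f_cont assms(1,4,5) that by (intro hardy_mean_le_dominated) auto
    also have "\<dots> \<le> b * hardy_norm p f"
      using hardy_mean_root_le_hardy_norm[OF assms(2)] assms(4) that by (intro mult_left_mono) auto
    finally show ?thesis .
  qed
  show "g \<in> hardy_space p"
    unfolding hardy_space_def using assms(3) bound
    by (auto intro!: bdd_aboveI2[where M = "b * hardy_norm p f"])
  show "hardy_norm p g \<le> b * hardy_norm p f"
    unfolding hardy_norm_def[of p g] using bound by (intro cSUP_least) auto
qed

lemma norm_le_of_norm_diff_le:
  fixes v w :: "'a::real_normed_vector"
  assumes "norm (w - v) \<le> \<delta> * norm v"
  shows "norm w \<le> (1 + \<delta>) * norm v"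
  using assms norm_triangle_ineq[of "w - v" v] by (simp add: algebra_simps)

lemma norm_ge_of_norm_diff_le:
  fixes v w :: "'a::real_normed_vector"
  assumes "norm (w - v) \<le> \<delta> * norm v"
  shows "(1 - \<delta>) * norm v \<le> norm w"
  using assms norm_triangle_ineq2[of v w] by (simp add: algebra_simps norm_minus_commute)

lemma relative_perturbation_bounded_nonzero:
  fixes f g :: "'a \<Rightarrow> 'b::real_normed_vector"
  assumes "bounded (f ` A)" "\<forall>z\<in>A. f z \<noteq> 0" "0 \<le> \<delta>" "\<delta> < 1"
    and close: "\<forall>z\<in>A. norm (g z - f z) \<le> \<delta> * norm (f z)"
  shows "bounded (g ` A)" and "\<forall>z\<in>A. g z \<noteq> 0"
proof -
  obtain B where B: "\<forall>z\<in>A. norm (f z) \<le> B"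
    using assms(1) by (auto simp: bounded_iff)
  have "norm (g z) \<le> (1 + \<delta>) * B" if "z \<in> A" for z
  proof -
    have "norm (g z) \<le> (1 + \<delta>) * norm (f z)"
      using close that by (intro norm_le_of_norm_diff_le) auto
    also have "\<dots> \<le> (1 + \<delta>) * B"
      using B that assms(3) by (intro mult_left_mono) auto
    finally show ?thesis .
  qed
  then show "bounded (g ` A)"
    unfolding bounded_iff by blast
  show "\<forall>z\<in>A. g z \<noteq> 0"
  proof
    fix z
    assume "z \<in> A"
    then have "(1 - \<delta>) * norm (f z) \<le> norm (g z)" and "f z \<noteq> 0"
      using close assms(2) by (auto intro: norm_ge_of_norm_diff_le)
    then show "g z \<noteq> 0"
      using assms(4) by (auto simp: mult_le_0_iff)
  qed
qed

lemma hardy_norm_relative_perturbation: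
  assumes "p > 0" "f \<in> hardy_space p" "g holomorphic_on ball 0 1" "0 \<le> \<delta>" "\<delta> < 1"
    and close: "\<forall>z\<in>ball 0 1. cmod (g z - f z) \<le> \<delta> * cmod (f z)"
  shows "g \<in> hardy_space p" and "\<bar>hardy_norm p g - hardy_norm p f\<bar> \<le> \<delta> * hardy_norm p f"
proof -
  have upper: "\<forall>z\<in>ball 0 1. cmod (g z) \<le> (1 + \<delta>) * cmod (f z)"
    using close by (auto intro: norm_le_of_norm_diff_le)
  have lower: "\<forall>z\<in>ball 0 1. cmod (f z) \<le> inverse (1 - \<delta>) * cmod (g z)"
  proof
    fix z :: complex
    assume "z \<in> ball 0 1"
    then have "(1 - \<delta>) * cmod (f z) \<le> cmod (g z)"
      using close by (intro norm_ge_of_norm_diff_le) auto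
    then show "cmod (f z) \<le> inverse (1 - \<delta>) * cmod (g z)"
      using \<open>\<delta> < 1\<close> by (simp add: field_simps)
  qed
  show g_hardy: "g \<in> hardy_space p"
    using assms(4) by (intro hardy_space_dominated(1)[OF assms(1-3) _ upper]) simp
  have upper_norm: "hardy_norm p g \<le> (1 + \<delta>) * hardy_norm p f"
    using assms(4) by (intro hardy_space_dominated(2)[OF assms(1-3) _ upper]) simp
  have "hardy_norm p f \<le> inverse (1 - \<delta>) * hardy_norm p g"
  proof (rule hardy_space_dominated(2)[OF assms(1) g_hardy _ _ lower])
    show "f holomorphic_on ball 0 1"
      using assms(2) by (simp add: hardy_space_def)
  qed (use \<open>\<delta> < 1\<close> in simp)
  then have lower_norm: "(1 - \<delta>) * hardy_norm p f \<le> hardy_norm p g"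
    using \<open>\<delta> < 1\<close> by (simp add: field_simps)
  show "\<bar>hardy_norm p g - hardy_norm p f\<bar> \<le> \<delta> * hardy_norm p f"
    using upper_norm lower_norm by (simp add: abs_le_iff algebra_simps)
qed

lemma norm_fps_mult_nth_le:
  fixes F G :: "'a::{comm_ring_1,real_normed_algebra} fps"
  assumes "\<And>i. i \<le> k \<Longrightarrow> norm (F $ i) \<le> e"
  shows "norm ((F * G) $ k) \<le> e * (\<Sum>i\<le>k. norm (G $ i))"
proof -
  have "(F * G) $ k = (\<Sum>i=0..k. G $ i * F $ (k - i))"
    by (simp add: fps_mult_nth mult.commute[of F G])
  also have "norm \<dots> \<le> (\<Sum>i=0..k. norm (G $ i) * e)"
    using assms
    by (intro order_trans[OF norm_sum] sum_mono order_trans[OF norm_mult_ineq] mult_left_mono) auto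
  also have "\<dots> = e * (\<Sum>i\<le>k. norm (G $ i))"
    by (simp add: atLeast0AtMost sum_distrib_left mult.commute)
  finally show ?thesis .
qed

lemma fps_mult_one_plus_cutoff_quotient_nth:
  fixes F D :: "'a::field fps"
  assumes "F $ 0 \<noteq> 0" "j \<le> n"
  shows "(F * (1 + fps_cutoff (Suc n) (D * inverse F))) $ j = F $ j + D $ j"
proof -
  have "(F * fps_cutoff (Suc n) (D * inverse F)) $ j = (F * (D * inverse F)) $ j"
    using assms(2) by (intro fps_cutoff_right_mult_nth) auto
  also have "F * (D * inverse F) = D"
    using inverse_mult_eq_1'[OF assms(1)] by (metis mult.left_commute mult.right_neutral)
  finally show ?thesis
    by (simp add: distrib_left)
qed

lemma norm_poly_le_sum_norm_coeff:
  fixes q :: "'a::{comm_ring_1,real_normed_algebra_1} poly"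
  assumes "norm z \<le> 1" "degree q \<le> n"
  shows "norm (poly q z) \<le> (\<Sum>k\<le>n. norm (coeff q k))"
proof -
  have "norm (poly q z) \<le> (\<Sum>k\<le>degree q. norm (coeff q k * z ^ k))"
    unfolding poly_altdef by (rule norm_sum)
  also have "\<dots> \<le> (\<Sum>k\<le>degree q. norm (coeff q k))"
  proof (intro sum_mono order_trans[OF norm_mult_ineq])
    fix k
    have "norm (z ^ k) \<le> 1"
      using assms(1) norm_power_ineq[of z k] power_le_one[of "norm z" k] by simp
    then show "norm (coeff q k) * norm (z ^ k) \<le> norm (coeff q k)"
      by (simp add: mult_left_le)
  qed
  also have "\<dots> \<le> (\<Sum>k\<le>n. norm (coeff q k))"
    using assms(2) by (intro sum_mono2) auto
  finally show ?thesis .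
qed

lemma taylor_coeff_eq_fps_nth:
  "f has_fps_expansion F \<Longrightarrow> taylor_coeff f j = F $ j"
  by (simp add: taylor_coeff_def fps_nth_fps_expansion)

lemma norm_poly_truncate_mult_le:
  fixes D G :: "'a::{comm_ring_1,real_normed_algebra_1} fps"
  assumes "norm z \<le> 1" "\<And>j. j \<le> n \<Longrightarrow> norm (D $ j) \<le> e"
  shows "norm (poly (truncate_fps (Suc n) (D * G)) z) \<le> e * (\<Sum>k\<le>n. \<Sum>i\<le>k. norm (G $ i))"
proof -
  have "norm (poly (truncate_fps (Suc n) (D * G)) z)
      \<le> (\<Sum>k\<le>n. norm (coeff (truncate_fps (Suc n) (D * G)) k))"
    using assms(1) degree_truncate_fps[of "Suc n" "D * G"]
    by (intro norm_poly_le_sum_norm_coeff) auto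
  also have "\<dots> = (\<Sum>k\<le>n. norm ((D * G) $ k))"
    by (simp add: coeff_truncate_fps)
  also have "\<dots> \<le> (\<Sum>k\<le>n. e * (\<Sum>i\<le>k. norm (G $ i)))"
    using assms(2) by (intro sum_mono norm_fps_mult_nth_le) auto
  also have "\<dots> = e * (\<Sum>k\<le>n. \<Sum>i\<le>k. norm (G $ i))"
    by (simp add: sum_distrib_left)
  finally show ?thesis .
qed

lemma has_fps_expansion_poly:
  fixes q :: "'a::{banach,real_normed_div_algebra,comm_ring_1} poly"
  shows "poly q has_fps_expansion fps_of_poly q"
proof -
  have "poly q = eval_fps (fps_of_poly q)"
    by (simp add: fun_eq_iff)
  then show ?thesis
    by (simp add: eval_fps_has_fps_expansion)
qed

lemma relative_perturbation_shifting_taylor_coeffs: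
  assumes "f holomorphic_on ball 0 1" "f 0 \<noteq> 0"
  obtains K where "K \<ge> 0"
    and "\<And>d e. (\<And>j. j \<le> n \<Longrightarrow> cmod (d j) \<le> e) \<Longrightarrow>
           \<exists>g. g holomorphic_on ball 0 1 \<and>
               (\<forall>z\<in>ball 0 1. cmod (g z - f z) \<le> K * e * cmod (f z)) \<and>
               (\<forall>j\<le>n. taylor_coeff g j = taylor_coeff f j + d j)"
proof -
  define F where "F = fps_expansion f 0"
  define K where "K = (\<Sum>k\<le>n. \<Sum>i\<le>k. norm (inverse F $ i))"
  have f_expansion: "f has_fps_expansion F"
    unfolding F_def using assms(1) by (intro has_fps_expansion_fps_expansion) auto
  have F0: "F $ 0 \<noteq> 0"
    using fps_nth_fps_expansion[OF f_expansion, of 0] assms(2) by simp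
  show ?thesis
  proof (rule that[of K])
    show "K \<ge> 0"
      by (simp add: K_def sum_nonneg)
  next
    fix d :: "nat \<Rightarrow> complex" and e :: real
    assume d: "\<And>j. j \<le> n \<Longrightarrow> cmod (d j) \<le> e"
    define S where "S = Abs_fps d * inverse F"
    define g where "g z = f z * (1 + poly (truncate_fps (Suc n) S) z)" for z
    have "g has_fps_expansion F * (1 + fps_cutoff (Suc n) S)"
      unfolding g_def using has_fps_expansion_poly[of "truncate_fps (Suc n) S"]
      by (intro fps_expansion_intros f_expansion) simp
    then have "taylor_coeff g j = taylor_coeff f j + d j" if "j \<le> n" for j
      using fps_mult_one_plus_cutoff_quotient_nth[OF F0 that, of "Abs_fps d"]
        taylor_coeff_eq_fps_nth[OF f_expansion]
      by (simp add: taylor_coeff_eq_fps_nth S_def)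
    moreover have "cmod (g z - f z) \<le> K * e * cmod (f z)" if "z \<in> ball 0 1" for z
    proof -
      have "cmod (poly (truncate_fps (Suc n) S) z) \<le> e * K"
        unfolding S_def K_def using that d by (intro norm_poly_truncate_mult_le) auto
      then have "cmod (f z) * cmod (poly (truncate_fps (Suc n) S) z) \<le> cmod (f z) * (e * K)"
        by (rule mult_left_mono) simp
      then show ?thesis
        by (simp add: g_def algebra_simps norm_mult)
    qed
    moreover have "g holomorphic_on ball 0 1"
      unfolding g_def using assms(1) by (intro holomorphic_intros)
    ultimately show "\<exists>g. g holomorphic_on ball 0 1 \<and>
               (\<forall>z\<in>ball 0 1. cmod (g z - f z) \<le> K * e * cmod (f z)) \<and>
               (\<forall>j\<le>n. taylor_coeff g j = taylor_coeff f j + d j)"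
      by blast
  qed
qed

theorem proposition2:
  fixes p :: real and n :: nat and f :: "complex \<Rightarrow> complex"
  assumes "p > 1" and "n > 1"
    and "f holomorphic_on ball 0 1"
    and "bounded (f ` ball 0 1)"
    and "\<forall>z\<in>ball 0 1. f z \<noteq> 0"
    and "f \<in> hardy_space p"
    and "\<not> (\<exists>a :: nat \<Rightarrow> complex. \<forall>z\<in>ball 0 1. f z = (\<Sum>j\<le>n. a j * z ^ j))"
  shows "\<exists>\<epsilon>0 > 0. \<exists>C. \<forall>\<epsilon>::real. \<epsilon> < \<epsilon>0 \<longrightarrow>
           (\<forall>d :: nat \<Rightarrow> complex. sqrt (\<Sum>j\<le>n. (cmod (d j))\<^sup>2) \<le> \<epsilon> \<longrightarrow>
              (\<exists>g. g holomorphic_on ball 0 1 \<and> bounded (g ` ball 0 1) \<and>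
                   (\<forall>z\<in>ball 0 1. g z \<noteq> 0) \<and> g \<in> hardy_space p \<and>
                   (\<forall>j\<le>n. taylor_coeff g j = taylor_coeff f j + d j) \<and>
                   \<bar>hardy_norm p g - hardy_norm p f\<bar> \<le> C * \<epsilon>))"
proof -
  have "f 0 \<noteq> 0"
    using assms(5) by simp
  then obtain K where "K \<ge> 0" and shift:
    "\<And>d e. (\<And>j. j \<le> n \<Longrightarrow> cmod (d j) \<le> e) \<Longrightarrow>
       \<exists>g. g holomorphic_on ball 0 1 \<and> (\<forall>z\<in>ball 0 1. cmod (g z - f z) \<le> K * e * cmod (f z)) \<and>
           (\<forall>j\<le>n. taylor_coeff g j = taylor_coeff f j + d j)"
    using relative_perturbation_shifting_taylor_coeffs[OF assms(3), where n = n] by blast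
  have "\<exists>g. g holomorphic_on ball 0 1 \<and> bounded (g ` ball 0 1) \<and>
        (\<forall>z\<in>ball 0 1. g z \<noteq> 0) \<and> g \<in> hardy_space p \<and>
        (\<forall>j\<le>n. taylor_coeff g j = taylor_coeff f j + d j) \<and>
        \<bar>hardy_norm p g - hardy_norm p f\<bar> \<le> K * hardy_norm p f * \<epsilon>"
    if "\<epsilon> < 1 / (K + 1)" and d: "sqrt (\<Sum>j\<le>n. (cmod (d j))\<^sup>2) \<le> \<epsilon>" for \<epsilon> d
  proof -
    have d_le: "cmod (d j) \<le> \<epsilon>" if "j \<le> n" for j
      using member_le_L2_set[of "{..n}" j "\<lambda>j. cmod (d j)"] that d by (simp add: L2_set_def)
    then obtain g where g: "g holomorphic_on ball 0 1"
      and close: "\<forall>z\<in>ball 0 1. cmod (g z - f z) \<le> K * \<epsilon> * cmod (f z)"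
      and coeffs: "\<forall>j\<le>n. taylor_coeff g j = taylor_coeff f j + d j"
      using shift by blast
    have "0 \<le> \<epsilon>"
      using d_le[of 0] norm_ge_zero[of "d 0"] by linarith
    then have \<delta>: "0 \<le> K * \<epsilon>" "K * \<epsilon> < 1"
      using \<open>K \<ge> 0\<close> that(1) by (auto simp: field_simps)
    show ?thesis
      using relative_perturbation_bounded_nonzero[OF assms(4,5) \<delta> close]
        hardy_norm_relative_perturbation[OF _ assms(6) g \<delta> close] assms(1) g coeffs
      by (auto simp: ac_simps)
  qed
  moreover have "1 / (K + 1) > 0"
    using \<open>K \<ge> 0\<close> by simp
  ultimately show ?thesis
    by blast
qed

end
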